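(* For each $t\in\{0,1,\dots,T-1\}$ and $i\in\{1,\dots,N\}$, the control limits satisfy $\lim_{k\to\infty}\delta_i^{(k,t)}=\xi_i$; that is, for all sufficiently large $k$, replacement is not optimal in any state $(x,k)$ with $x<\xi_i$ at epoch $t$.
   Context: Fix integers $N\ge1$, $T\ge1$, reals $\alpha_0,\beta_0>0$, and for each $i\in\{1,\dots,N\}$ an integer failure threshold $\xi_i\ge1$ and costs $0<c_p^i<c_u^i$. $\mathbb{N}_0=\{0,1,2,\dots\}$. For real $r>0$ and $p\in(0,1)$, $NB(r,p)$ is the distribution on $\mathbb{N}_0$ with $P(n)=\frac{\Gamma(n+r)}{\Gamma(r)n!}p^r(1-p)^n$; $NB(0,p)$ is the point mass at $0$. For $t\in\{0,\dots,T\}$ let $p_t=\frac{\beta_0+Nt}{\beta_0+Nt+1}$. Let $\mathbb{I}_i(x)=1$ if $x\ge\xi_i$, else $0$; $\mathcal{A}_i(x)=\{0,1\}$ if $x<\xi_i$ and $\{1\}$ if $x\ge\xi_i$ ($a=1$: replacement, $a=0$: no action); $C_i(x,a)=a(1-\mathbb{I}_i(x))c_p^i+\mathbb{I}_i(x)c_u^i$. Define $\tilde V^{N,i}_T(x,k)=\mathbb{I}_i(x)c_u^i$ and for $t=T-1,\dots,0$: $\tilde V^{N,i}_t(x,k)=\min_{a\in\mathcal{A}_i(x)}\{C_i(x,a)+\mathbb{E}[\tilde V^{N,i}_{t+1}(x(1-a)+Z,\;k+Z+K)]\}$, where $Z\sim NB(\alpha_0+k,p_t)$ and $K\sim NB((N-1)(\alpha_0+k),p_t)$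 are independent. An action is optimal if it attains this minimum. The control limit $\delta_i^{(k,t)}\in\{1,\dots,\xi_i\}$ is the (unique) integer such that, for every $x\in\mathbb{N}_0$, the action $a=1$ is optimal in state $(x,k)$ at epoch $t$ iff $x\ge\delta_i^{(k,t)}$ (its existence is a result of the paper). *)

theory Defs
  imports "HOL-Analysis.Analysis"
begin

definition nbpmf :: "real \<Rightarrow> real \<Rightarrow> nat \<Rightarrow> real" where
  "nbpmf r p n = (if r = 0 then (if n = 0 then 1 else 0)
     else Gamma (real n + r) / (Gamma r * fact n) * p powr r * (1 - p) ^ n)"

definition pt :: "nat \<Rightarrow> real \<Rightarrow> nat \<Rightarrow> real" where
  "pt N \<beta>0 t = (\<beta>0 + real N * real t) / (\<beta>0 + real N * real t + 1)"

definition Ind :: "nat \<Rightarrow> nat \<Rightarrow> real" where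
  "Ind \<xi> x = (if x \<ge> \<xi> then 1 else 0)"

definition Acts :: "nat \<Rightarrow> nat \<Rightarrow> nat set" where
  "Acts \<xi> x = (if x < \<xi> then {0, 1} else {1})"

definition Cst :: "nat \<Rightarrow> real \<Rightarrow> real \<Rightarrow> nat \<Rightarrow> nat \<Rightarrow> real" where
  "Cst \<xi> cp cu x a = real a * (1 - Ind \<xi> x) * cp + Ind \<xi> x * cu"

definition expnext :: "nat \<Rightarrow> real \<Rightarrow> real \<Rightarrow> nat \<Rightarrow> (nat \<Rightarrow> nat \<Rightarrow> real) \<Rightarrow> nat \<Rightarrow> nat \<Rightarrow> real" where
  "expnext N \<alpha>0 \<beta>0 t W y k =
     infsum (\<lambda>(z, m). nbpmf (\<alpha>0 + real k) (pt N \<beta>0 t) z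
                     * nbpmf ((real N - 1) * (\<alpha>0 + real k)) (pt N \<beta>0 t) m
                     * W (y + z) (k + z + m)) (UNIV :: (nat \<times> nat) set)"

text \<open>Value function indexed by the number n of remaining epochs (epoch t = T - n).\<close>
primrec Wv :: "nat \<Rightarrow> nat \<Rightarrow> real \<Rightarrow> real \<Rightarrow> nat \<Rightarrow> real \<Rightarrow> real \<Rightarrow> nat \<Rightarrow> nat \<Rightarrow> nat \<Rightarrow> real" where
  "Wv N T \<alpha>0 \<beta>0 \<xi> cp cu 0 x k = Ind \<xi> x * cu"
| "Wv N T \<alpha>0 \<beta>0 \<xi> cp cu (Suc n) x k =
     Min ((\<lambda>a. Cst \<xi> cp cu x a
               + expnext N \<alpha>0 \<beta>0 (T - Suc n) (Wv N T \<alpha>0 \<beta>0 \<xi> cp cu n) (x * (1 - a)) k)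
          ` Acts \<xi> x)"

definition Vt :: "nat \<Rightarrow> nat \<Rightarrow> real \<Rightarrow> real \<Rightarrow> nat \<Rightarrow> real \<Rightarrow> real \<Rightarrow> nat \<Rightarrow> nat \<Rightarrow> nat \<Rightarrow> real" where
  "Vt N T \<alpha>0 \<beta>0 \<xi> cp cu t x k = Wv N T \<alpha>0 \<beta>0 \<xi> cp cu (T - t) x k"

definition Qv :: "nat \<Rightarrow> nat \<Rightarrow> real \<Rightarrow> real \<Rightarrow> nat \<Rightarrow> real \<Rightarrow> real \<Rightarrow> nat \<Rightarrow> nat \<Rightarrow> nat \<Rightarrow> nat \<Rightarrow> real" where
  "Qv N T \<alpha>0 \<beta>0 \<xi> cp cu t a x k =
     Cst \<xi> cp cu x a + expnext N \<alpha>0 \<beta>0 t (Vt N T \<alpha>0 \<beta>0 \<xi> cp cu (Suc t)) (x * (1 - a)) k"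

definition optimal :: "nat \<Rightarrow> nat \<Rightarrow> real \<Rightarrow> real \<Rightarrow> nat \<Rightarrow> real \<Rightarrow> real \<Rightarrow> nat \<Rightarrow> nat \<Rightarrow> nat \<Rightarrow> nat \<Rightarrow> bool" where
  "optimal N T \<alpha>0 \<beta>0 \<xi> cp cu t a x k \<longleftrightarrow>
     a \<in> Acts \<xi> x \<and> (\<forall>b \<in> Acts \<xi> x. Qv N T \<alpha>0 \<beta>0 \<xi> cp cu t a x k \<le> Qv N T \<alpha>0 \<beta>0 \<xi> cp cu t b x k)"

definition ctrl_limit :: "nat \<Rightarrow> nat \<Rightarrow> real \<Rightarrow> real \<Rightarrow> nat \<Rightarrow> real \<Rightarrow> real \<Rightarrow> nat \<Rightarrow> nat \<Rightarrow> nat" where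
  "ctrl_limit N T \<alpha>0 \<beta>0 \<xi> cp cu k t =
     (THE d. d \<in> {1..\<xi>} \<and> (\<forall>x. optimal N T \<alpha>0 \<beta>0 \<xi> cp cu t 1 x k \<longleftrightarrow> x \<ge> d))"

end

theory Submission imports Defs "HOL-Real_Asymp.Real_Asymp" begin

text \<open>For \<open>x < \<xi>\<close>, replacing instead of waiting costs \<open>c\<^sub>p\<close> now, while the two
  continuation values differ only on the event \<open>Z < \<xi>\<close>: once the number of failures
  reaches \<open>\<xi>\<close> the value function forgets the exact count. The value function is
  bounded, and the probability that \<open>Z \<sim> NB(\<alpha>\<^sub>0 + k, p\<^sub>t)\<close> falls below \<open>\<xi>\<close> vanishes as
  \<open>k \<rightarrow> \<infinity>\<close>, since each of its finitely many point masses is \<open>p\<^sub>t\<^bsup>\<alpha>\<^sub>0+k\<^esup>\<close> times a polynomial in \<open>k\<close>.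
  Hence for large \<open>k\<close> no action \<open>a = 1\<close> is optimal below \<open>\<xi>\<close> and the control limit equals \<open>\<xi>\<close>.\<close>

lemma nbpmf_nonneg:
  assumes "0 \<le> r" "0 < p" "p < 1"
  shows "0 \<le> nbpmf r p n"
proof (cases "r = 0")
  case False
  then have "Gamma (real n + r) > 0" "Gamma r > 0"
    using assms by (auto intro!: Gamma_real_pos)
  then show ?thesis using assms unfolding nbpmf_def by auto
qed (simp add: nbpmf_def)

lemma nbpmf_eq_pochhammer:
  assumes "0 < r"
  shows "nbpmf r p n = pochhammer r n / fact n * (1 - p) ^ n * p powr r"
proof -
  have "r \<notin> \<int>\<^sub>\<le>\<^sub>0" using assms by (auto elim!: nonpos_Ints_cases)
  then have "pochhammer r n = Gamma (r + real n) / Gamma r" by (rule pochhammer_Gamma)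
  then show ?thesis using assms unfolding nbpmf_def by (simp add: field_simps add.commute)
qed

text \<open>The negative binomial series \<open>\<Sum>\<^sub>n (-r gchoose n) (-(1-p))\<^sup>n = p\<^sup>-\<^sup>r\<close>.\<close>

lemma nbpmf_has_sum:
  assumes "0 \<le> r" "0 < p" "p < 1"
  shows "(nbpmf r p has_sum 1) UNIV"
proof (cases "r = 0")
  case True
  then show ?thesis
    by (intro has_sum_finite_neutralI[of "{0}"]) (auto simp: nbpmf_def)
next
  case False
  with assms have r: "r > 0" by simp
  have term_eq: "((-r) gchoose n) * (-(1-p)) ^ n * p powr r = nbpmf r p n" for n
  proof -
    have "((-r) gchoose n) * (-(1-p)) ^ n = ((-1)^n * (-1)^n) * (pochhammer r n / fact n * (1 - p) ^ n)"
      unfolding gbinomial_pochhammer power_minus[of "1 - p"] by (simp add: divide_inverse mult_ac)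
    also have "(-1::real)^n * (-1)^n = 1" by (simp flip: power_add)
    finally show ?thesis using nbpmf_eq_pochhammer[OF r] by simp
  qed
  have "\<bar>-(1-p)\<bar> < 1" using assms by simp
  from sums_mult2[OF gen_binomial_real[OF this, of "-r"], of "p powr r"]
  have "(\<lambda>n. ((-r) gchoose n) * (-(1-p)) ^ n * p powr r) sums (p powr (-r) * p powr r)"
    by simp
  moreover have "p powr (-r) * p powr r = 1"
    using assms by (simp add: powr_minus field_simps)
  ultimately have "nbpmf r p sums 1" unfolding term_eq by simp
  then show ?thesis by (rule sums_nonneg_imp_has_sum) (use nbpmf_nonneg assms in auto)
qed

lemma pochhammer_le_power:
  assumes "0 \<le> a"
  shows "pochhammer a n \<le> (a + real n) ^ n"
proof -
  have "pochhammer a n = (\<Prod>i\<in>{0..<n}. a + real i)" by (simp add: pochhammer_prod)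
  also have "\<dots> \<le> (\<Prod>i\<in>{0..<n}. a + real n)"
    by (intro prod_mono) (use assms in auto)
  finally show ?thesis by simp
qed

lemma nbpmf_tendsto_zero_shape:
  assumes "0 < a" "0 < p" "p < 1"
  shows "(\<lambda>k. nbpmf (a + real k) p z) \<longlonglongrightarrow> 0"
proof (rule tendsto_sandwich)
  let ?bound = "\<lambda>k::nat. (a + real k + real z) ^ z * p powr (a + real k) * ((1 - p) ^ z / fact z)"
  show "\<forall>\<^sub>F k in sequentially. 0 \<le> nbpmf (a + real k) p z"
    using nbpmf_nonneg assms by auto
  have "nbpmf (a + real k) p z \<le> ?bound k" for k
  proof -
    have "nbpmf (a + real k) p z = pochhammer (a + real k) z * ((1 - p) ^ z / fact z * p powr (a + real k))"
      using assms by (simp add: nbpmf_eq_pochhammer)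
    also have "\<dots> \<le> (a + real k + real z) ^ z * ((1 - p) ^ z / fact z * p powr (a + real k))"
      by (intro mult_right_mono pochhammer_le_power) (use assms in auto)
    finally show ?thesis by (simp add: mult_ac)
  qed
  then show "\<forall>\<^sub>F k in sequentially. nbpmf (a + real k) p z \<le> ?bound k"
    by simp
  have "(\<lambda>k::nat. (a + real k + real z) ^ z * p powr (a + real k)) \<longlonglongrightarrow> 0"
    using assms by real_asymp
  then show "?bound \<longlonglongrightarrow> 0"
    by (rule tendsto_mult_left_zero)
qed simp

lemma has_sum_product_nonneg:
  fixes a b :: "'a \<Rightarrow> real"
  assumes "(a has_sum SA) A" "(b has_sum SB) B" "\<And>x. 0 \<le> a x" "\<And>y. 0 \<le> b y"
  shows "((\<lambda>(x, y). a x * b y) has_sum (SA * SB)) (A \<times> B)"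
proof -
  have inner: "((\<lambda>y. (\<lambda>(x, y). a x * b y) (x, y)) has_sum (a x * SB)) B" for x
    using has_sum_cmult_right[OF assms(2), of "a x"] by simp
  have outer: "((\<lambda>x. a x * SB) has_sum (SA * SB)) A"
    using has_sum_cmult_left[OF assms(1)] by simp
  have "(\<lambda>(x, y). a x * b y) summable_on A \<times> B"
    by (rule summable_on_SigmaI[OF inner]) (use outer assms in \<open>auto simp: has_sum_imp_summable\<close>)
  then show ?thesis by (rule has_sum_SigmaI[OF inner outer])
qed

lemma weighted_infsum_bounds:
  fixes w f :: "'a \<Rightarrow> real"
  assumes w: "(w has_sum 1) A" "\<And>x. x \<in> A \<Longrightarrow> 0 \<le> w x"
    and f: "\<And>x. x \<in> A \<Longrightarrow> 0 \<le> f x \<and> f x \<le> B"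
  shows "0 \<le> (\<Sum>\<^sub>\<infinity>x\<in>A. w x * f x) \<and> (\<Sum>\<^sub>\<infinity>x\<in>A. w x * f x) \<le> B"
proof
  have Bw: "((\<lambda>x. w x * B) has_sum B) A"
    using has_sum_cmult_left[OF w(1), of B] by simp
  have "(\<lambda>x. w x * f x) summable_on A"
    by (rule summable_on_comparison_test[OF has_sum_imp_summable[OF Bw]])
      (use w f in \<open>auto intro: mult_left_mono\<close>)
  then show "(\<Sum>\<^sub>\<infinity>x\<in>A. w x * f x) \<le> B"
    using has_sum_mono[OF has_sum_infsum Bw] w f by (auto intro: mult_left_mono)
  show "0 \<le> (\<Sum>\<^sub>\<infinity>x\<in>A. w x * f x)"
    by (rule infsum_nonneg) (use w f in auto)
qed

lemma weighted_infsum_le_add_mass: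
  fixes w f g :: "'a \<Rightarrow> real"
  assumes w: "(w has_sum 1) A" "\<And>x. x \<in> A \<Longrightarrow> 0 \<le> w x"
    and mass: "(w has_sum s) S" "S \<subseteq> A"
    and f: "\<And>x. x \<in> A \<Longrightarrow> 0 \<le> f x \<and> f x \<le> B"
    and g: "\<And>x. x \<in> A \<Longrightarrow> 0 \<le> g x \<and> g x \<le> B"
    and agree: "\<And>x. x \<in> A - S \<Longrightarrow> f x = g x"
  shows "(\<Sum>\<^sub>\<infinity>x\<in>A. w x * f x) \<le> (\<Sum>\<^sub>\<infinity>x\<in>A. w x * g x) + B * s"
proof (rule has_sum_mono)
  have Bw: "((\<lambda>x. w x * B) has_sum B) A"
    using has_sum_cmult_left[OF w(1), of B] by simp
  have summable: "(\<lambda>x. w x * h x) summable_on A"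
    if "\<And>x. x \<in> A \<Longrightarrow> 0 \<le> h x \<and> h x \<le> B" for h
    by (rule summable_on_comparison_test[OF has_sum_imp_summable[OF Bw]])
      (use w that in \<open>auto intro: mult_left_mono\<close>)
  show "((\<lambda>x. w x * f x) has_sum (\<Sum>\<^sub>\<infinity>x\<in>A. w x * f x)) A"
    using summable[OF f] by (rule has_sum_infsum)
  have "((\<lambda>x. if x \<in> S then w x else 0) has_sum s) A"
    using mass by (subst has_sum_cong_neutral[where T = S]) auto
  then show "((\<lambda>x. w x * g x + B * (if x \<in> S then w x else 0)) has_sum
      ((\<Sum>\<^sub>\<infinity>x\<in>A. w x * g x) + B * s)) A"
    by (intro has_sum_add has_sum_infsum summable[OF g] has_sum_cmult_right)
  show "w x * f x \<le> w x * g x + B * (if x \<in> S then w x else 0)" if "x \<in> A" for x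
  proof (cases "x \<in> S")
    case True
    have "w x * f x \<le> w x * B" using w f that by (intro mult_left_mono) auto
    moreover have "0 \<le> w x * g x" using w g that by auto
    ultimately show ?thesis using True by (simp add: mult.commute)
  qed (use agree that in auto)
qed

lemma pt_pos: "0 < \<beta>0 \<Longrightarrow> 0 < pt N \<beta>0 t"
  and pt_less_one: "0 < \<beta>0 \<Longrightarrow> pt N \<beta>0 t < 1"
  unfolding pt_def by (auto simp: field_simps add_pos_nonneg)

definition joint_nbpmf :: "nat \<Rightarrow> real \<Rightarrow> real \<Rightarrow> nat \<Rightarrow> nat \<Rightarrow> nat \<times> nat \<Rightarrow> real" where
  "joint_nbpmf N \<alpha>0 \<beta>0 t k = (\<lambda>(z, m). nbpmf (\<alpha>0 + real k) (pt N \<beta>0 t) z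
     * nbpmf ((real N - 1) * (\<alpha>0 + real k)) (pt N \<beta>0 t) m)"

lemma expnext_eq_infsum_joint_nbpmf:
  "expnext N \<alpha>0 \<beta>0 t W y k =
     (\<Sum>\<^sub>\<infinity>zm. joint_nbpmf N \<alpha>0 \<beta>0 t k zm * W (y + fst zm) (k + fst zm + snd zm))"
  unfolding expnext_def joint_nbpmf_def by (simp add: case_prod_unfold)

context
  fixes N :: nat and \<alpha>0 \<beta>0 :: real
  assumes N: "N \<ge> 1" and \<alpha>0: "\<alpha>0 > 0" and \<beta>0: "\<beta>0 > 0"
begin

lemma joint_nbpmf_nonneg: "0 \<le> joint_nbpmf N \<alpha>0 \<beta>0 t k zm"
  using N \<alpha>0 pt_pos[OF \<beta>0] pt_less_one[OF \<beta>0]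
  by (auto simp: joint_nbpmf_def case_prod_beta intro!: mult_nonneg_nonneg nbpmf_nonneg)

lemma joint_nbpmf_has_sum:
  assumes "(nbpmf (\<alpha>0 + real k) (pt N \<beta>0 t) has_sum s) A"
  shows "(joint_nbpmf N \<alpha>0 \<beta>0 t k has_sum s) (A \<times> UNIV)"
  using has_sum_product_nonneg[OF assms nbpmf_has_sum] N \<alpha>0
    pt_pos[OF \<beta>0] pt_less_one[OF \<beta>0] nbpmf_nonneg
  unfolding joint_nbpmf_def by auto

lemma joint_nbpmf_has_sum_one: "(joint_nbpmf N \<alpha>0 \<beta>0 t k has_sum 1) UNIV"
  using joint_nbpmf_has_sum[OF nbpmf_has_sum] \<alpha>0 pt_pos[OF \<beta>0] pt_less_one[OF \<beta>0] by simp

lemma expnext_bounds: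
  assumes "\<And>y k. 0 \<le> W y k \<and> W y k \<le> B"
  shows "0 \<le> expnext N \<alpha>0 \<beta>0 t W y k \<and> expnext N \<alpha>0 \<beta>0 t W y k \<le> B"
  unfolding expnext_eq_infsum_joint_nbpmf
  by (rule weighted_infsum_bounds[OF joint_nbpmf_has_sum_one joint_nbpmf_nonneg assms])

lemma expnext_le_expnext_zero:
  assumes W: "\<And>y k. 0 \<le> W y k \<and> W y k \<le> B"
    and W_above: "\<And>y k. \<xi> \<le> y \<Longrightarrow> W y k = W \<xi> k"
  shows "expnext N \<alpha>0 \<beta>0 t W x k
    \<le> expnext N \<alpha>0 \<beta>0 t W 0 k + B * (\<Sum>z<\<xi>. nbpmf (\<alpha>0 + real k) (pt N \<beta>0 t) z)"
  unfolding expnext_eq_infsum_joint_nbpmf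
proof (rule weighted_infsum_le_add_mass[OF joint_nbpmf_has_sum_one joint_nbpmf_nonneg])
  show "(joint_nbpmf N \<alpha>0 \<beta>0 t k has_sum (\<Sum>z<\<xi>. nbpmf (\<alpha>0 + real k) (pt N \<beta>0 t) z)) ({..<\<xi>} \<times> UNIV)"
    by (intro joint_nbpmf_has_sum has_sum_finiteI) auto
  show "W (x + fst zm) (k + fst zm + snd zm) = W (0 + fst zm) (k + fst zm + snd zm)"
    if "zm \<in> UNIV - {..<\<xi>} \<times> UNIV" for zm
  proof -
    have "\<xi> \<le> fst zm" using that by (cases zm) auto
    then show ?thesis using W_above[of "x + fst zm"] W_above[of "fst zm"] by simp
  qed
qed (use W in auto)

lemma Wv_bounds:
  assumes "0 \<le> cp" "cp \<le> cu"
  shows "0 \<le> Wv N T \<alpha>0 \<beta>0 \<xi> cp cu n x k \<and> Wv N T \<alpha>0 \<beta>0 \<xi> cp cu n x k \<le> real (Suc n) * cu"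
proof (induction n arbitrary: x k)
  case 0
  then show ?case using assms by (simp add: Ind_def)
next
  case (Suc n)
  let ?f = "\<lambda>a. Cst \<xi> cp cu x a + expnext N \<alpha>0 \<beta>0 (T - Suc n) (Wv N T \<alpha>0 \<beta>0 \<xi> cp cu n) (x * (1 - a)) k"
  have E: "0 \<le> expnext N \<alpha>0 \<beta>0 (T - Suc n) (Wv N T \<alpha>0 \<beta>0 \<xi> cp cu n) y k
      \<and> expnext N \<alpha>0 \<beta>0 (T - Suc n) (Wv N T \<alpha>0 \<beta>0 \<xi> cp cu n) y k \<le> real (Suc n) * cu" for y
    by (rule expnext_bounds) (use Suc.IH in auto)
  have acts: "finite (Acts \<xi> x)" "1 \<in> Acts \<xi> x" by (auto simp: Acts_def)
  have "0 \<le> Min (?f ` Acts \<xi> x)"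
    using acts E assms by (subst Min_ge_iff) (auto simp: Cst_def Ind_def Acts_def)
  moreover have "Min (?f ` Acts \<xi> x) \<le> ?f 1" using acts by (intro Min_le finite_imageI imageI)
  moreover have "?f 1 \<le> cu + real (Suc n) * cu"
    using E assms by (intro add_mono) (auto simp: Cst_def Ind_def)
  ultimately show ?case by (simp add: algebra_simps)
qed

end

lemma Wv_eq_above_threshold:
  "\<xi> \<le> y \<Longrightarrow> Wv N T \<alpha>0 \<beta>0 \<xi> cp cu n y k = Wv N T \<alpha>0 \<beta>0 \<xi> cp cu n \<xi> k"
  by (cases n) (auto simp: Ind_def Acts_def Cst_def)

lemma optimal_replace_above_threshold:
  "\<xi> \<le> x \<Longrightarrow> optimal N T \<alpha>0 \<beta>0 \<xi> cp cu t 1 x k"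
  by (simp add: optimal_def Acts_def)

lemma ctrl_limit_eq_threshold:
  assumes "1 \<le> \<xi>" "\<forall>x < \<xi>. \<not> optimal N T \<alpha>0 \<beta>0 \<xi> cp cu t 1 x k"
  shows "ctrl_limit N T \<alpha>0 \<beta>0 \<xi> cp cu k t = \<xi>"
proof -
  have iff: "optimal N T \<alpha>0 \<beta>0 \<xi> cp cu t 1 x k \<longleftrightarrow> \<xi> \<le> x" for x
    using assms(2) optimal_replace_above_threshold not_le by blast
  show ?thesis
    unfolding ctrl_limit_def
  proof (rule the_equality)
    fix d assume "d \<in> {1..\<xi>} \<and> (\<forall>x. optimal N T \<alpha>0 \<beta>0 \<xi> cp cu t 1 x k \<longleftrightarrow> d \<le> x)"
    then have "\<forall>x. \<xi> \<le> x \<longleftrightarrow> d \<le> x" using iff by auto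
    then show "d = \<xi>" by (metis le_antisym order_refl)
  qed (use assms(1) iff in auto)
qed

text \<open>By \<open>Wv_bounds\<close>, \<open>(T - t) c\<^sub>u\<close> bounds the value function at epoch \<open>t + 1\<close>.\<close>

lemma not_optimal_replace_below_threshold:
  assumes "N \<ge> 1" "\<alpha>0 > 0" "\<beta>0 > 0" "0 \<le> cp" "cp \<le> cu" "t < T" "x < \<xi>"
    and small: "real (T - t) * cu * (\<Sum>z<\<xi>. nbpmf (\<alpha>0 + real k) (pt N \<beta>0 t) z) < cp"
  shows "\<not> optimal N T \<alpha>0 \<beta>0 \<xi> cp cu t 1 x k"
proof -
  define W where "W = Vt N T \<alpha>0 \<beta>0 \<xi> cp cu (Suc t)"
  have W_eq: "W = Wv N T \<alpha>0 \<beta>0 \<xi> cp cu (T - Suc t)" by (simp add: fun_eq_iff W_def Vt_def)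
  have "Suc (T - Suc t) = T - t" using \<open>t < T\<close> by simp
  then have W: "0 \<le> W y k' \<and> W y k' \<le> real (T - t) * cu" for y k'
    using Wv_bounds[OF assms(1-5)] unfolding W_eq by metis
  have W_above: "\<xi> \<le> y \<Longrightarrow> W y k' = W \<xi> k'" for y k'
    unfolding W_eq by (rule Wv_eq_above_threshold)
  have "expnext N \<alpha>0 \<beta>0 t W x k < cp + expnext N \<alpha>0 \<beta>0 t W 0 k"
    using expnext_le_expnext_zero[where W = W and B = "real (T - t) * cu", OF assms(1-3) W W_above, of t x k] small by simp
  moreover have "Qv N T \<alpha>0 \<beta>0 \<xi> cp cu t 1 x k = cp + expnext N \<alpha>0 \<beta>0 t W 0 k"
    and "Qv N T \<alpha>0 \<beta>0 \<xi> cp cu t 0 x k = expnext N \<alpha>0 \<beta>0 t W x k"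
    using \<open>x < \<xi>\<close> by (simp_all add: Qv_def W_def Cst_def Ind_def)
  moreover have "0 \<in> Acts \<xi> x" using \<open>x < \<xi>\<close> by (simp add: Acts_def)
  ultimately show ?thesis unfolding optimal_def by force
qed

theorem proposition3:
  fixes N T :: nat and \<alpha>0 \<beta>0 :: real
    and \<xi> :: "nat \<Rightarrow> nat" and cp cu :: "nat \<Rightarrow> real"
  assumes "N \<ge> 1" "T \<ge> 1" "\<alpha>0 > 0" "\<beta>0 > 0"
    and "\<forall>i\<in>{1..N}. \<xi> i \<ge> 1 \<and> 0 < cp i \<and> cp i < cu i"
    and "t < T" and "i \<in> {1..N}"
  shows "(\<lambda>k. ctrl_limit N T \<alpha>0 \<beta>0 (\<xi> i) (cp i) (cu i) k t) \<longlonglongrightarrow> \<xi> i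
    \<and> (\<forall>\<^sub>F k in sequentially. \<forall>x < \<xi> i. \<not> optimal N T \<alpha>0 \<beta>0 (\<xi> i) (cp i) (cu i) t 1 x k)"
proof -
  have \<xi>: "1 \<le> \<xi> i" and c: "0 < cp i" "cp i < cu i" using assms(5,7) by auto
  let ?mass = "\<lambda>k. \<Sum>z<\<xi> i. nbpmf (\<alpha>0 + real k) (pt N \<beta>0 t) z"
  have "?mass \<longlonglongrightarrow> 0"
    using assms(3) pt_pos[OF assms(4)] pt_less_one[OF assms(4)]
    by (intro tendsto_null_sum nbpmf_tendsto_zero_shape) auto
  then have "(\<lambda>k. real (T - t) * cu i * ?mass k) \<longlonglongrightarrow> 0"
    by (rule tendsto_mult_right_zero)
  then have "\<forall>\<^sub>F k in sequentially. real (T - t) * cu i * ?mass k < cp i"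
    using c by (intro order_tendstoD(2)) auto
  then have not_opt: "\<forall>\<^sub>F k in sequentially. \<forall>x < \<xi> i. \<not> optimal N T \<alpha>0 \<beta>0 (\<xi> i) (cp i) (cu i) t 1 x k"
  proof eventually_elim
    case (elim k)
    show ?case
      using not_optimal_replace_below_threshold[OF assms(1,3,4) _ _ assms(6) _ elim] c by simp
  qed
  then have "\<forall>\<^sub>F k in sequentially. ctrl_limit N T \<alpha>0 \<beta>0 (\<xi> i) (cp i) (cu i) k t = \<xi> i"
    by eventually_elim (rule ctrl_limit_eq_threshold[OF \<xi>])
  then show ?thesis using not_opt by (simp add: tendsto_eventually)
qed

end
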